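(* Let $\mathbb{U}$ be a finite-dimensional real vector space, let $T_n=[t_n,t_{n+1}]$ with $\Delta t_n=t_{n+1}-t_n>0$, and let $S\ge 1$. Let $M:\mathbb{U}\times\mathbb{U}\times\mathbb{U}\to\mathbb{R}$ be linear in its second and third arguments, and let $P\ge1$. For $p=1,\dots,P$ let $Q_p:\mathbb{U}\to\mathbb{R}$ be continuously Fréchet-differentiable with derivative $Q_p'(u;v)$ (linear in $v$). Let $\tilde F:\mathbb{U}\times\mathbb{U}^P\times\mathbb{U}\to\mathbb{R}$ be linear in its last argument. Let $\mathcal{I}_n$ be a linear functional on a space of real-valued functions on $T_n$ (containing all integrands below) which is sign-preserving ($\phi\ge0\Rightarrow\mathcal{I}_n[\phi]\ge0$) and satisfies $\mathcal{I}_n[1]=\Delta t_n$. Let $\mathbb{X}_n=\{u\in\mathbb{P}_S(T_n;\mathbb{U}): u(t_n)=u_0\}$ for a given $u_0\in\mathbb{U}$, and $\dot{\mathbb{X}}_n=\mathbb{P}_{S-1}(T_n;\mathbb{U})$. Suppose $(u,(\tilde w_p)_{p=1}^P)\in\mathbb{X}_n\times\dot{\mathbb{X}}_n^P$ satisfies $$\mathcal{I}_n[M(u;\dot u,v)]=\mathcal{I}_n[\tilde F(u,(\tilde w_p);v)]\quad\text{for all } v\in\dot{\mathbb{X}}_n,$$ $$\mathcal{I}_n[M(u;v_p,\tilde w_p)]=\int_{T_n}Q_p'(u;v_p)\,dt\quad\text{for all } v_p\in\dot{\mathbb{X}}_n,\ p=1,\dots,P,$$ where all functions of $t$ are evaluated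 pointwise in time. Fix $q\in\{1,\dots,P\}$. Then: (i) if $\tilde F(a,(b_p);b_q)=0$ for all $a\in\mathbb{U}$, $(b_p)\in\mathbb{U}^P$, then $Q_q(u(t_{n+1}))=Q_q(u(t_n))$; (ii) if $\tilde F(a,(b_p);b_q)\ge0$ for all such arguments, then $Q_q(u(t_{n+1}))\ge Q_q(u(t_n))$; (iii) if $\tilde F(a,(b_p);b_q)\le0$ for all such arguments, then $Q_q(u(t_{n+1}))\le Q_q(u(t_n))$. In all cases $Q_q(u(t_{n+1}))-Q_q(u(t_n))=\mathcal{I}_n[\tilde F(u,(\tilde w_p);\tilde w_q)]$.
   Context: $\mathbb{P}_k(T_n;\mathbb{U})$ denotes polynomials of degree at most $k$ in $t\in T_n$ with coefficients in $\mathbb{U}$; $\dot u$ is the time derivative of $u$, which lies in $\dot{\mathbb{X}}_n$. *)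

theory Defs
  imports "HOL-Analysis.Analysis"
begin

text \<open>Polynomials of degree at most k in the time variable with coefficients in a real
vector space (represented by their values at all real times; restriction to T_n is
irrelevant since a polynomial on an interval of positive length extends uniquely).\<close>
definition vpoly_space :: "nat \<Rightarrow> (real \<Rightarrow> 'a::real_vector) set" where
  "vpoly_space k = {f. \<exists>c::nat \<Rightarrow> 'a. \<forall>t. f t = (\<Sum>i\<le>k. (t ^ i) *\<^sub>R c i)}"

definition trial_space :: "nat \<Rightarrow> real \<Rightarrow> 'a::real_vector \<Rightarrow> (real \<Rightarrow> 'a) set" where
  "trial_space S tn u0 = {u \<in> vpoly_space S. u tn = u0}"

definition quadrature_functional ::
    "real \<Rightarrow> real \<Rightarrow> (real \<Rightarrow> real) set \<Rightarrow> ((real \<Rightarrow> real) \<Rightarrow> real) \<Rightarrow> bool" where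
  "quadrature_functional tn tn1 V In \<longleftrightarrow>
     (\<lambda>_. 1) \<in> V \<and>
     (\<forall>f\<in>V. \<forall>g\<in>V. (\<lambda>t. f t + g t) \<in> V \<and> In (\<lambda>t. f t + g t) = In f + In g) \<and>
     (\<forall>c. \<forall>f\<in>V. (\<lambda>t. c * f t) \<in> V \<and> In (\<lambda>t. c * f t) = c * In f) \<and>
     (\<forall>f\<in>V. (\<forall>t\<in>{tn..tn1}. 0 \<le> f t) \<longrightarrow> 0 \<le> In f) \<and>
     In (\<lambda>_. 1) = tn1 - tn"

end

theory Submission
  imports Defs
begin

text \<open>Since \<open>u\<close> has degree at most \<open>S\<close>, its derivative \<open>u'\<close> is an admissible test
function. Testing the second equation for \<open>p = q\<close> with \<open>u'\<close> and the first with \<open>w q\<close> turns the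
integral of \<open>Q' q (u t) (u' t)\<close> over \<open>[tn, tn1]\<close>, which by the chain rule and the fundamental
theorem of calculus equals \<open>Q q (u tn1) - Q q (u tn)\<close>, into \<open>In (\<lambda>t. F (u t) (\<lambda>p. w p t) (w q t))\<close>.
The sign statements then follow from positivity of \<open>In\<close>.\<close>

lemma vpoly_space_has_vector_derivative:
  fixes f :: "real \<Rightarrow> 'a::real_normed_vector"
  assumes "f \<in> vpoly_space S"
  obtains f' where "f' \<in> vpoly_space (S - 1)" and "\<And>t. (f has_vector_derivative f' t) (at t)"
proof -
  obtain c where c: "f = (\<lambda>t. \<Sum>i\<le>S. (t ^ i) *\<^sub>R c i)"
    using assms unfolding vpoly_space_def by blast
  define f' where "f' = (\<lambda>t. \<Sum>i\<le>S. (real i * t ^ (i - 1)) *\<^sub>R c i)"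
  have "(f has_vector_derivative f' t) (at t)" for t
    unfolding c f'_def
  proof (intro has_vector_derivative_sum)
    fix i
    have "((\<lambda>t. t ^ i) has_vector_derivative real i * t ^ (i - 1)) (at t)"
      using DERIV_pow[of i t] by (simp add: has_real_derivative_iff_has_vector_derivative)
    then show "((\<lambda>t. (t ^ i) *\<^sub>R c i) has_vector_derivative (real i * t ^ (i - 1)) *\<^sub>R c i) (at t)"
      by (rule bounded_linear.has_vector_derivative[OF bounded_linear_scaleR_left])
  qed
  moreover have "f' \<in> vpoly_space (S - 1)"
  proof (cases S)
    case 0
    then show ?thesis
      unfolding vpoly_space_def f'_def by (intro CollectI exI[of _ "\<lambda>_. 0"]) simp
  next
    case (Suc k)
    have "f' t = (\<Sum>j\<le>S - 1. (t ^ j) *\<^sub>R (real (Suc j) *\<^sub>R c (Suc j)))" for t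
      unfolding f'_def Suc by (subst sum.atMost_Suc_shift) (simp add: mult.commute)
    then show ?thesis
      unfolding vpoly_space_def by (intro CollectI exI[of _ "\<lambda>j. real (Suc j) *\<^sub>R c (Suc j)"]) simp
  qed
  ultimately show ?thesis using that by blast
qed

lemma has_integral_derivative_comp:
  fixes g :: "'a::real_normed_vector \<Rightarrow> real" and u :: "real \<Rightarrow> 'a"
  assumes "a \<le> b"
    and g: "\<And>x. (g has_derivative blinfun_apply (g' x)) (at x)"
    and u: "\<And>t. (u has_vector_derivative u' t) (at t)"
  shows "((\<lambda>t. g' (u t) (u' t)) has_integral g (u b) - g (u a)) {a..b}"
proof -
  have "((\<lambda>t. g (u t)) has_vector_derivative g' (u t) (u' t)) (at t)" for t
  proof -
    have "((g \<circ> u) has_derivative (\<lambda>h. g' (u t) (h *\<^sub>R u' t))) (at t)"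
      using diff_chain_at[OF u[of t, unfolded has_vector_derivative_def] g] by (simp add: o_def)
    then show ?thesis
      by (simp add: has_vector_derivative_def o_def blinfun.scaleR_right)
  qed
  then show ?thesis
    using assms(1) by (intro fundamental_theorem_of_calculus) (auto intro: has_vector_derivative_at_within)
qed

lemma quadrature_functional_nonneg:
  assumes "quadrature_functional a b V In" "f \<in> V" "\<And>t. t \<in> {a..b} \<Longrightarrow> 0 \<le> f t"
  shows "0 \<le> In f"
  using assms unfolding quadrature_functional_def by blast

lemma quadrature_functional_nonpos:
  assumes In: "quadrature_functional a b V In" and "f \<in> V" "\<And>t. t \<in> {a..b} \<Longrightarrow> f t \<le> 0"
  shows "In f \<le> 0"
proof -
  have scaled: "\<forall>c. \<forall>f\<in>V. (\<lambda>t. c * f t) \<in> V \<and> In (\<lambda>t. c * f t) = c * In f"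
    using In unfolding quadrature_functional_def by (elim conjE)
  have "(\<lambda>t. (-1) * f t) \<in> V" and neg: "In (\<lambda>t. (-1) * f t) = - In f"
    using scaled[rule_format, OF \<open>f \<in> V\<close>, of "-1"] by simp_all
  then have "0 \<le> In (\<lambda>t. (-1) * f t)"
    using assms(3) by (intro quadrature_functional_nonneg[OF In]) auto
  then show ?thesis using neg by simp
qed
theorem theorem2p1:
  fixes tn tn1 :: real and S :: nat
    and M :: "'u::euclidean_space \<Rightarrow> 'u \<Rightarrow> 'u \<Rightarrow> real"
    and Q :: "'p::finite \<Rightarrow> 'u \<Rightarrow> real"
    and Q' :: "'p \<Rightarrow> 'u \<Rightarrow> 'u \<Rightarrow>\<^sub>L real"
    and F :: "'u \<Rightarrow> ('p \<Rightarrow> 'u) \<Rightarrow> 'u \<Rightarrow> real"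
    and V :: "(real \<Rightarrow> real) set" and In :: "(real \<Rightarrow> real) \<Rightarrow> real"
    and u0 :: 'u and u :: "real \<Rightarrow> 'u" and w :: "'p \<Rightarrow> real \<Rightarrow> 'u" and q :: 'p
  assumes dt: "tn < tn1"
    and S: "S \<ge> 1"
    and M_lin2: "\<forall>a z. linear (\<lambda>v. M a v z)"
    and M_lin3: "\<forall>a v. linear (M a v)"
    and Q_deriv: "\<forall>p a. (Q p has_derivative blinfun_apply (Q' p a)) (at a)"
    and Q'_cont: "\<forall>p. continuous_on UNIV (Q' p)"
    and F_lin: "\<forall>a b. linear (F a b)"
    and In: "quadrature_functional tn tn1 V In"
    and u: "u \<in> trial_space S tn u0"
    and w: "\<forall>p. w p \<in> vpoly_space (S - 1)"
    and eq1: "\<forall>v\<in>vpoly_space (S - 1).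
                (\<lambda>t. M (u t) (vector_derivative u (at t)) (v t)) \<in> V \<and>
                (\<lambda>t. F (u t) (\<lambda>p. w p t) (v t)) \<in> V \<and>
                In (\<lambda>t. M (u t) (vector_derivative u (at t)) (v t))
                  = In (\<lambda>t. F (u t) (\<lambda>p. w p t) (v t))"
    and eq2: "\<forall>p. \<forall>v\<in>vpoly_space (S - 1).
                (\<lambda>t. M (u t) (v t) (w p t)) \<in> V \<and>
                In (\<lambda>t. M (u t) (v t) (w p t))
                  = integral {tn..tn1} (\<lambda>t. blinfun_apply (Q' p (u t)) (v t))"
    and Vq: "(\<lambda>t. F (u t) (\<lambda>p. w p t) (w q t)) \<in> V"
  shows "((\<forall>a b. F a b (b q) = 0) \<longrightarrow> Q q (u tn1) = Q q (u tn)) \<and>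
         ((\<forall>a b. F a b (b q) \<ge> 0) \<longrightarrow> Q q (u tn1) \<ge> Q q (u tn)) \<and>
         ((\<forall>a b. F a b (b q) \<le> 0) \<longrightarrow> Q q (u tn1) \<le> Q q (u tn)) \<and>
         Q q (u tn1) - Q q (u tn) = In (\<lambda>t. F (u t) (\<lambda>p. w p t) (w q t))"
proof -
  obtain u' where u'_space: "u' \<in> vpoly_space (S - 1)"
    and u'_deriv: "\<And>t. (u has_vector_derivative u' t) (at t)"
    using u unfolding trial_space_def by (blast elim: vpoly_space_has_vector_derivative)
  have "Q q (u tn1) - Q q (u tn) = integral {tn..tn1} (\<lambda>t. Q' q (u t) (u' t))"
    using has_integral_derivative_comp[of tn tn1 "Q q" "Q' q", OF _ _ u'_deriv] dt Q_deriv
    by (simp add: integral_unique)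
  also have "\<dots> = In (\<lambda>t. M (u t) (u' t) (w q t))"
    using eq2 u'_space by auto
  also have "\<dots> = In (\<lambda>t. F (u t) (\<lambda>p. w p t) (w q t))"
    using eq1 w vector_derivative_at[OF u'_deriv] by auto
  finally have energy: "Q q (u tn1) - Q q (u tn) = In (\<lambda>t. F (u t) (\<lambda>p. w p t) (w q t))" .
  have "(\<forall>a b. F a b (b q) \<ge> 0) \<longrightarrow> In (\<lambda>t. F (u t) (\<lambda>p. w p t) (w q t)) \<ge> 0"
    using quadrature_functional_nonneg[OF In Vq] by auto
  moreover have "(\<forall>a b. F a b (b q) \<le> 0) \<longrightarrow> In (\<lambda>t. F (u t) (\<lambda>p. w p t) (w q t)) \<le> 0"
    using quadrature_functional_nonpos[OF In Vq] by auto
  ultimately show ?thesis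
    using energy by (smt (verit))
qed

end
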